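(* Let $\mathcal T$ be a set of at least two binary trees over $L$, $\sigma$ a leaf ordering, and let $L_0,\dots,L_k$ and $m_0,\dots,m_k$ be as constructed in the context. For any $T\in\mathcal T$ and any $i\in\{0,\dots,k\}$, let $r_i$ be the root (top vertex) of the subtree $T(L_i)$. Then the subtree $T_{r_i}$ contains no leaf $l_j$ with $j<m_i$.
   Context: Trees. Fix a finite label set $L$ containing a distinguished label $\rho$, and let $n=|L\setminus\{\rho\}|$. A (planted, binary phylogenetic) tree $T$ over $L$ is a rooted tree whose top vertex is labeled $\rho$ and has exactly one child $r(T)$ (the root), in which every other non-leaf vertex has exactly two children, and whose leaves are bijectively labeled by $L\setminus\{\rho\}$; vertices are identified with their labels. For a vertex $v$, $T_v$ is the subtree rooted at $v$. For $S\subseteq L$, $T(S)$ is the smallest subtree of $T$ containing all vertices labeled by $S$, and $T|_S$ is obtained from $T(S)$ by suppressing all unlabeled vertices with fewer than two children. OLA vectors. A leaf ordering is a bijection $\sigma:L\setminus\{\rho\}\to\{0,\dots,n-1\}$; write $l_i=\sigma^{-1}(i)$. For a binary tree $T$ whose non-$\rho$ labels lie in $L\setminus\{\rho\}$ and a vertex $v\ne\rho$, let $\mu(v)=\min\{\sigma(l): l\in L(T_v)\setminus\{\rho\}\}$; each leaf $l$ gets index $\sigma(l)$, and each internal vertex $v$ (not a leaf, not $\rho$) with children $v_1,v_2$ gets index $\sigma(v):=-\max\{\mu(v_1),\mu(v_2)\}$. Let $T^i:=T|_{\{\rho,l_0,\dots,l_i\}}$. For $1\le i\le n-1$ let $v_i$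 be the sibling of $l_i$ in $T^i$, and define $OLA(T,\sigma)_i:=\sigma(v_i)$ (index computed in $T^i$). Mismatched indices. For a finite set $\mathcal T$ of at least two binary trees over $L$ and a leaf ordering $\sigma$, the set $M\subseteq\{1,\dots,n-1\}$ of mismatched indices is built by processing $i=1,\dots,n-1$ in increasing order: $i$ is put in $M$ iff either there are $T,T'\in\mathcal T$ with $OLA(T,\sigma)_i\ne OLA(T',\sigma)_i$, or all $OLA(T,\sigma)_i$ ($T\in\mathcal T$) equal a common value $-j$ with $j$ already in $M$. Construction of leaf sets. Write $M=\{m_1<\dots<m_k\}$ and set $m_0:=0$. Let $I_c=\{1,\dots,n-1\}\setminus M$; for $j\in I_c$ all vectors $OLA(T,\sigma)$ have a common value $c_j$ at index $j$. Initialize $L_0=\{\rho,l_0\}$ and $L_i=\{l_{m_i}\}$ for $1\le i\le k$. For a current set $L_i$ define $$span(L_i):=\Big(\bigcup_{l_j\in L_i\setminus\{l_{m_i},\rho\}}\{-j,j\}\Big)\cup\{m_i\}.$$ Then process the indices $j\in I_c$ in increasing order: add $l_j$ to the unique set $L_i$ for which $c_j\in span(L_i)$ (span taken with the current contents of $L_i$). The resulting sets $L_0,\dots,L_k$ partition $L$. *)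

theory Defs
  imports Main
begin

text \<open>Planted binary phylogenetic trees: the top vertex labelled rho is implicit;
  a value of type btree is the subtree rooted at the root r(T) (the unique child of rho).\<close>

datatype 'a btree = Leaf 'a | Node "'a btree" "'a btree"

fun leaves :: "'a btree \<Rightarrow> 'a list" where
  "leaves (Leaf a) = [a]"
| "leaves (Node l r) = leaves l @ leaves r"

definition is_tree_over :: "'a set \<Rightarrow> 'a \<Rightarrow> 'a btree \<Rightarrow> bool" where
  "is_tree_over L \<rho> T \<longleftrightarrow> distinct (leaves T) \<and> set (leaves T) = L - {\<rho>}"

text \<open>Restriction T|_S (rho is always kept as the implicit top vertex):
  take the minimal subtree spanned by S and suppress unary vertices.\<close>
fun restrict :: "'a set \<Rightarrow> 'a btree \<Rightarrow> 'a btree option" where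
  "restrict S (Leaf a) = (if a \<in> S then Some (Leaf a) else None)"
| "restrict S (Node l r) = (case (restrict S l, restrict S r) of
      (None, None) \<Rightarrow> None
    | (Some x, None) \<Rightarrow> Some x
    | (None, Some y) \<Rightarrow> Some y
    | (Some x, Some y) \<Rightarrow> Some (Node x y))"

fun sibling :: "'a \<Rightarrow> 'a btree \<Rightarrow> 'a btree option" where
  "sibling x (Leaf a) = None"
| "sibling x (Node l r) =
     (if l = Leaf x then Some r
      else if r = Leaf x then Some l
      else (case sibling x l of Some s \<Rightarrow> Some s | None \<Rightarrow> sibling x r))"

definition mu :: "('a \<Rightarrow> nat) \<Rightarrow> 'a btree \<Rightarrow> nat" where
  "mu \<sigma> t = Min (\<sigma> ` set (leaves t))"

text \<open>Index of a vertex (given as the subtree rooted at it).\<close>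
fun vidx :: "('a \<Rightarrow> nat) \<Rightarrow> 'a btree \<Rightarrow> int" where
  "vidx \<sigma> (Leaf a) = int (\<sigma> a)"
| "vidx \<sigma> (Node l r) = - int (max (mu \<sigma> l) (mu \<sigma> r))"

definition lab :: "'a set \<Rightarrow> 'a \<Rightarrow> ('a \<Rightarrow> nat) \<Rightarrow> nat \<Rightarrow> 'a" where
  "lab L \<rho> \<sigma> i = inv_into (L - {\<rho>}) \<sigma> i"

definition nleaves :: "'a set \<Rightarrow> 'a \<Rightarrow> nat" where
  "nleaves L \<rho> = card (L - {\<rho>})"

definition ola :: "'a set \<Rightarrow> 'a \<Rightarrow> ('a \<Rightarrow> nat) \<Rightarrow> 'a btree \<Rightarrow> nat \<Rightarrow> int" where
  "ola L \<rho> \<sigma> T i =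
     vidx \<sigma> (the (sibling (lab L \<rho> \<sigma> i) (the (restrict (lab L \<rho> \<sigma> ` {0..i}) T))))"

definition mis_cond :: "'a set \<Rightarrow> 'a \<Rightarrow> ('a \<Rightarrow> nat) \<Rightarrow> 'a btree set \<Rightarrow> nat set \<Rightarrow> nat \<Rightarrow> bool" where
  "mis_cond L \<rho> \<sigma> Ts M i \<longleftrightarrow>
     (\<exists>T\<in>Ts. \<exists>T'\<in>Ts. ola L \<rho> \<sigma> T i \<noteq> ola L \<rho> \<sigma> T' i)
   \<or> (\<exists>j\<in>M. \<forall>T\<in>Ts. ola L \<rho> \<sigma> T i = - int j)"

fun Mset :: "'a set \<Rightarrow> 'a \<Rightarrow> ('a \<Rightarrow> nat) \<Rightarrow> 'a btree set \<Rightarrow> nat \<Rightarrow> nat set" where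
  "Mset L \<rho> \<sigma> Ts 0 = {}"
| "Mset L \<rho> \<sigma> Ts (Suc i) =
     (let M = Mset L \<rho> \<sigma> Ts i in
      if mis_cond L \<rho> \<sigma> Ts M (Suc i) then insert (Suc i) M else M)"

definition mismatched :: "'a set \<Rightarrow> 'a \<Rightarrow> ('a \<Rightarrow> nat) \<Rightarrow> 'a btree set \<Rightarrow> nat set" where
  "mismatched L \<rho> \<sigma> Ts = Mset L \<rho> \<sigma> Ts (nleaves L \<rho> - 1)"

definition mi :: "'a set \<Rightarrow> 'a \<Rightarrow> ('a \<Rightarrow> nat) \<Rightarrow> 'a btree set \<Rightarrow> nat \<Rightarrow> nat" where
  "mi L \<rho> \<sigma> Ts i =
     (if i = 0 then 0 else sorted_list_of_set (mismatched L \<rho> \<sigma> Ts) ! (i - 1))"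

text \<open>Common OLA value c_j for j not mismatched.\<close>
definition cval :: "'a set \<Rightarrow> 'a \<Rightarrow> ('a \<Rightarrow> nat) \<Rightarrow> 'a btree set \<Rightarrow> nat \<Rightarrow> int" where
  "cval L \<rho> \<sigma> Ts j = ola L \<rho> \<sigma> (SOME T. T \<in> Ts) j"

definition span :: "'a set \<Rightarrow> 'a \<Rightarrow> ('a \<Rightarrow> nat) \<Rightarrow> 'a btree set \<Rightarrow> 'a set \<Rightarrow> nat \<Rightarrow> int set" where
  "span L \<rho> \<sigma> Ts S i =
     (\<Union>x \<in> S - {lab L \<rho> \<sigma> (mi L \<rho> \<sigma> Ts i), \<rho>}. {- int (\<sigma> x), int (\<sigma> x)})
     \<union> {int (mi L \<rho> \<sigma> Ts i)}"

definition init_sets :: "'a set \<Rightarrow> 'a \<Rightarrow> ('a \<Rightarrow> nat) \<Rightarrow> 'a btree set \<Rightarrow> nat \<Rightarrow> 'a set" where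
  "init_sets L \<rho> \<sigma> Ts i =
     (if i = 0 then {\<rho>, lab L \<rho> \<sigma> 0} else {lab L \<rho> \<sigma> (mi L \<rho> \<sigma> Ts i)})"

definition cstep :: "'a set \<Rightarrow> 'a \<Rightarrow> ('a \<Rightarrow> nat) \<Rightarrow> 'a btree set \<Rightarrow> (nat \<Rightarrow> 'a set) \<Rightarrow> nat \<Rightarrow> (nat \<Rightarrow> 'a set)" where
  "cstep L \<rho> \<sigma> Ts Ls j =
     (if j \<in> mismatched L \<rho> \<sigma> Ts then Ls
      else (let i = (THE i. i \<le> card (mismatched L \<rho> \<sigma> Ts)
                           \<and> cval L \<rho> \<sigma> Ts j \<in> span L \<rho> \<sigma> Ts (Ls i) i)
            in Ls(i := insert (lab L \<rho> \<sigma> j) (Ls i))))"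

definition leafsets :: "'a set \<Rightarrow> 'a \<Rightarrow> ('a \<Rightarrow> nat) \<Rightarrow> 'a btree set \<Rightarrow> nat \<Rightarrow> 'a set" where
  "leafsets L \<rho> \<sigma> Ts =
     foldl (cstep L \<rho> \<sigma> Ts) (init_sets L \<rho> \<sigma> Ts) [1..<nleaves L \<rho>]"

text \<open>Lowest common ancestor subtree of a nonempty leaf set S (not containing rho).\<close>
fun lca :: "'a set \<Rightarrow> 'a btree \<Rightarrow> 'a btree" where
  "lca S (Leaf a) = Leaf a"
| "lca S (Node l r) =
     (if S \<subseteq> set (leaves l) then lca S l
      else if S \<subseteq> set (leaves r) then lca S r
      else Node l r)"

text \<open>Leaves (other than rho) of T_{r}, where r is the top vertex of T(S):
  if rho is in S then r = rho and T_rho is the whole tree.\<close>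
definition top_subtree_leaves :: "'a \<Rightarrow> 'a set \<Rightarrow> 'a btree \<Rightarrow> 'a set" where
  "top_subtree_leaves \<rho> S T = (if \<rho> \<in> S then set (leaves T) else set (leaves (lca S T)))"

end

(*
  Fix T and i >= 1 (for i = 0 there is nothing to show, as m_0 = 0). Along the construction we
  keep the invariant that every leaf below the root of T(L_i) has index at least m_i. Suppose
  l_j joins L_i and let s be the sibling of l_j in T^j; all leaves of s have index below j.
  If the index c_j of s is nonnegative, s is a leaf that already lies in L_i. Otherwise
  c_j = -sigma(x), where x lies in L_i and is the smallest leaf of one child e of s. The vertex
  of T underlying s then lies below the root of T(L_i): else T(L_i) would sit inside the child
  underlying e, making the seed l_{m_i} of L_i a leaf of e smaller than x. In both cases the
  parent of l_j in T^j comes from a vertex of T whose leaves of index at most j are l_j and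
  leaves of T(L_i), so adding l_j to L_i brings in no leaf of index below m_i.
*)

theory Submission
  imports Defs
begin

abbreviation leaf_set :: "'a btree \<Rightarrow> 'a set" where
  "leaf_set t \<equiv> set (leaves t)"

fun subtrees :: "'a btree \<Rightarrow> 'a btree set" where
  "subtrees (Leaf a) = {Leaf a}"
| "subtrees (Node l r) = insert (Node l r) (subtrees l \<union> subtrees r)"

definition siblings :: "'a btree \<Rightarrow> 'a btree \<Rightarrow> 'a btree \<Rightarrow> bool" where
  "siblings T t1 t2 \<longleftrightarrow> Node t1 t2 \<in> subtrees T \<or> Node t2 t1 \<in> subtrees T"

lemma subtrees_self [simp]: "t \<in> subtrees t"
  by (cases t) auto

lemma leaf_set_subtree: "t' \<in> subtrees t \<Longrightarrow> leaf_set t' \<subseteq> leaf_set t"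
  by (induction t) auto

lemma subtrees_trans: "t' \<in> subtrees t \<Longrightarrow> t'' \<in> subtrees t' \<Longrightarrow> t'' \<in> subtrees t"
  by (induction t) auto

lemma distinct_leaves_subtree: "t' \<in> subtrees t \<Longrightarrow> distinct (leaves t) \<Longrightarrow> distinct (leaves t')"
  by (induction t) auto

lemma leaf_set_nonempty: "leaf_set t \<noteq> {}"
  by (induction t) auto

lemma Leaf_in_subtrees: "x \<in> leaf_set t \<Longrightarrow> Leaf x \<in> subtrees t"
  by (induction t) auto

lemma siblings_sym: "siblings T t1 t2 \<longleftrightarrow> siblings T t2 t1"
  unfolding siblings_def by blast

lemma siblings_subtree_trans: "siblings t t1 t2 \<Longrightarrow> t \<in> subtrees T \<Longrightarrow> siblings T t1 t2"
  unfolding siblings_def using subtrees_trans by blast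

lemma siblings_leaf_set:
  assumes "siblings T t1 t2"
  obtains P where "P \<in> subtrees T" "leaf_set P = leaf_set t1 \<union> leaf_set t2"
  using assms unfolding siblings_def by (metis Un_commute leaves.simps(2) set_append)

lemma siblings_subtrees: "siblings T t1 t2 \<Longrightarrow> t1 \<in> subtrees T \<and> t2 \<in> subtrees T"
  unfolding siblings_def by (metis UnCI subtrees.simps(2) insertCI subtrees_self subtrees_trans)

lemma siblings_disjoint:
  "siblings T t1 t2 \<Longrightarrow> distinct (leaves T) \<Longrightarrow> leaf_set t1 \<inter> leaf_set t2 = {}"
  unfolding siblings_def using distinct_leaves_subtree by fastforce

lemma subtrees_laminar:
  "distinct (leaves t) \<Longrightarrow> t1 \<in> subtrees t \<Longrightarrow> t2 \<in> subtrees t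
   \<Longrightarrow> leaf_set t1 \<inter> leaf_set t2 \<noteq> {} \<Longrightarrow> t1 \<in> subtrees t2 \<or> t2 \<in> subtrees t1"
proof (induction t)
  case (Node l r)
  show ?case
  proof (cases "t1 = Node l r \<or> t2 = Node l r")
    case True
    then show ?thesis using Node.prems(2,3) by auto
  next
    case False
    then have "t1 \<in> subtrees l \<union> subtrees r" "t2 \<in> subtrees l \<union> subtrees r"
      using Node.prems(2,3) by auto
    moreover have "leaf_set l \<inter> leaf_set r = {}"
      using Node.prems(1) by auto
    then have "\<not> (t1 \<in> subtrees l \<and> t2 \<in> subtrees r)" "\<not> (t1 \<in> subtrees r \<and> t2 \<in> subtrees l)"
      using Node.prems(4) leaf_set_subtree by blast+
    ultimately show ?thesis using Node.IH Node.prems(1,4) by auto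
  qed
qed auto

lemma siblings_nested:
  assumes "distinct (leaves T)" "siblings T t1 t2" "R \<in> subtrees T"
    and "x \<in> leaf_set R" "x \<in> leaf_set t1"
  shows "leaf_set t1 \<union> leaf_set t2 \<subseteq> leaf_set R \<or> leaf_set R \<subseteq> leaf_set t1"
proof -
  obtain P where P: "P \<in> subtrees T" "P = Node t1 t2 \<or> P = Node t2 t1"
    using assms(2) unfolding siblings_def by blast
  have "x \<in> leaf_set P"
    using P(2) assms(5) by auto
  then have "R \<in> subtrees P \<or> P \<in> subtrees R"
    using subtrees_laminar[OF assms(1) assms(3) P(1)] assms(4) by blast
  then consider "P \<in> subtrees R" | "R = P" | "R \<in> subtrees t1" | "R \<in> subtrees t2"
    using P(2) by auto
  then show ?thesis
  proof cases
    case 1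
    then have "leaf_set P \<subseteq> leaf_set R" by (rule leaf_set_subtree)
    then show ?thesis using P(2) by auto
  next
    case 2
    then show ?thesis using P(2) by auto
  next
    case 3
    then show ?thesis using leaf_set_subtree by blast
  next
    case 4
    moreover have "leaf_set t1 \<inter> leaf_set t2 = {}"
      using siblings_disjoint assms(1,2) by blast
    ultimately show ?thesis
      using assms(4,5) leaf_set_subtree by blast
  qed
qed

lemma restrict_eq_None_iff: "restrict S t = None \<longleftrightarrow> leaf_set t \<inter> S = {}"
  by (induction t) (auto split: option.splits)

lemma leaf_set_restrict: "restrict S t = Some t' \<Longrightarrow> leaf_set t' = leaf_set t \<inter> S"
  by (induction t arbitrary: t') (auto split: option.splits if_splits simp: restrict_eq_None_iff)

lemma restrict_Node_subtree:
  "restrict S t = Some t' \<Longrightarrow> Node a b \<in> subtrees t' \<Longrightarrow>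
   \<exists>A B. Node A B \<in> subtrees t \<and> restrict S A = Some a \<and> restrict S B = Some b"
proof (induction t arbitrary: t')
  case (Node l r)
  then show ?case
    by (cases "restrict S l"; cases "restrict S r") fastforce+
qed (auto split: if_splits)

lemma restrict_siblings:
  "restrict S t = Some t' \<Longrightarrow> siblings t' a b \<Longrightarrow>
   \<exists>A B. siblings t A B \<and> restrict S A = Some a \<and> restrict S B = Some b"
  unfolding siblings_def by (metis restrict_Node_subtree)

lemma restrict_Node_child:
  assumes "restrict S t = Some (Node d1 d2)" "e = d1 \<or> e = d2"
  obtains E E' where "siblings t E E'" "restrict S E = Some e"
    "leaf_set (Node d1 d2) = (leaf_set E \<union> leaf_set E') \<inter> S"
proof -
  obtain D1 D2 where D: "Node D1 D2 \<in> subtrees t" "restrict S D1 = Some d1" "restrict S D2 = Some d2"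
    using restrict_Node_subtree[OF assms(1) subtrees_self] by blast
  have "leaf_set (Node d1 d2) = (leaf_set D1 \<union> leaf_set D2) \<inter> S"
    using leaf_set_restrict[OF D(2)] leaf_set_restrict[OF D(3)] by auto
  then show thesis
    using that D assms(2) unfolding siblings_def by (metis Un_commute)
qed

lemma sibling_in: "sibling x t = Some s \<Longrightarrow> x \<in> leaf_set t"
  by (induction t) (auto split: if_splits option.splits)

lemma sibling_exists:
  "x \<in> leaf_set t \<Longrightarrow> t \<noteq> Leaf x \<Longrightarrow> \<exists>s. sibling x t = Some s \<and> siblings t (Leaf x) s"
proof (induction t)
  case (Node l r)
  then show ?case
    unfolding siblings_def
    by (cases "sibling x l") (auto dest: sibling_in)
qed auto

lemma lca_in_subtrees: "lca S t \<in> subtrees t"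
  by (induction t) auto

lemma subset_leaf_set_lca: "S \<subseteq> leaf_set t \<Longrightarrow> S \<subseteq> leaf_set (lca S t)"
  by (induction t) auto

lemma leaf_set_lca_minimal:
  "distinct (leaves t) \<Longrightarrow> S \<noteq> {} \<Longrightarrow> S \<subseteq> leaf_set t \<Longrightarrow> t' \<in> subtrees t
   \<Longrightarrow> S \<subseteq> leaf_set t' \<Longrightarrow> leaf_set (lca S t) \<subseteq> leaf_set t'"
proof (induction t)
  case (Node l r)
  have disj: "leaf_set l \<inter> leaf_set r = {}"
    using Node.prems(1) by auto
  have t': "t' = Node l r \<or> t' \<in> subtrees l \<or> t' \<in> subtrees r"
    using Node.prems(4) by auto
  have in_l: "S \<subseteq> leaf_set l" if "t' \<in> subtrees l"
    using that Node.prems(5) leaf_set_subtree by blast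
  have in_r: "S \<subseteq> leaf_set r" if "t' \<in> subtrees r"
    using that Node.prems(5) leaf_set_subtree by blast
  have top: "leaf_set (lca S u) \<subseteq> leaf_set u" for u
    using leaf_set_subtree[OF lca_in_subtrees] .
  show ?case
  proof (cases "S \<subseteq> leaf_set l")
    case True
    then have "t' \<notin> subtrees r"
      using in_r disj Node.prems(2) by blast
    then show ?thesis
      using True t' Node.IH(1) Node.prems top[of l] by auto
  next
    case not_l: False
    show ?thesis
    proof (cases "S \<subseteq> leaf_set r")
      case True
      then have "t' \<notin> subtrees l"
        using in_l disj Node.prems(2) by blast
      then show ?thesis
        using True not_l t' Node.IH(2) Node.prems top[of r] by auto
    next
      case False
      then show ?thesis
        using not_l t' in_l in_r by auto
    qed
  qed
qed auto

lemma leaf_set_lca_insert_sibling: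
  assumes "distinct (leaves T)" "S \<subseteq> leaf_set T" "siblings T t1 t2"
    and "x \<in> leaf_set t1" "z \<in> S" "z \<in> leaf_set t2"
  shows "leaf_set (lca (insert x S) T) \<subseteq> leaf_set (lca S T) \<union> leaf_set t1 \<union> leaf_set t2"
proof -
  let ?R = "lca S T"
  have "leaf_set t1 \<subseteq> leaf_set T"
    using siblings_subtrees[OF assms(3)] leaf_set_subtree by blast
  then have S'_sub: "insert x S \<subseteq> leaf_set T"
    using assms(2,4) by blast
  have R: "?R \<in> subtrees T" "S \<subseteq> leaf_set ?R"
    using lca_in_subtrees subset_leaf_set_lca[OF assms(2)] by auto
  have "siblings T t2 t1"
    using assms(3) siblings_sym by blast
  moreover have "z \<in> leaf_set ?R"
    using R(2) assms(5) by blast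
  ultimately consider "leaf_set t2 \<union> leaf_set t1 \<subseteq> leaf_set ?R" | "leaf_set ?R \<subseteq> leaf_set t2"
    using siblings_nested[OF assms(1) _ R(1) _ assms(6)] by blast
  then show ?thesis
  proof cases
    case 1
    then have "insert x S \<subseteq> leaf_set ?R"
      using assms(4) R(2) by blast
    then have "leaf_set (lca (insert x S) T) \<subseteq> leaf_set ?R"
      by (rule leaf_set_lca_minimal[OF assms(1) insert_not_empty S'_sub R(1)])
    then show ?thesis by blast
  next
    case 2
    obtain P where P: "P \<in> subtrees T" "leaf_set P = leaf_set t1 \<union> leaf_set t2"
      using siblings_leaf_set[OF assms(3)] .
    have "insert x S \<subseteq> leaf_set P"
      using 2 assms(4) R(2) P(2) by blast
    then have "leaf_set (lca (insert x S) T) \<subseteq> leaf_set P"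
      by (rule leaf_set_lca_minimal[OF assms(1) insert_not_empty S'_sub P(1)])
    then show ?thesis
      using P(2) by blast
  qed
qed

lemma mu_obtain:
  obtains x where "x \<in> leaf_set t" "mu \<sigma> t = \<sigma> x" "\<forall>y\<in>leaf_set t. \<sigma> x \<le> \<sigma> y"
proof -
  have fin: "finite (\<sigma> ` leaf_set t)" and ne: "\<sigma> ` leaf_set t \<noteq> {}"
    using leaf_set_nonempty by auto
  obtain x where x: "x \<in> leaf_set t" "\<sigma> x = Min (\<sigma> ` leaf_set t)"
    using Min_in[OF fin ne] by auto
  show thesis
  proof (rule that[OF x(1)])
    show "mu \<sigma> t = \<sigma> x" unfolding mu_def x(2) ..
    show "\<forall>y\<in>leaf_set t. \<sigma> x \<le> \<sigma> y" unfolding x(2) using fin by simp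
  qed
qed

lemma vidx_Node_obtain:
  obtains x e where "e = d1 \<or> e = d2" "vidx \<sigma> (Node d1 d2) = - int (\<sigma> x)"
    "x \<in> leaf_set e" "\<forall>y\<in>leaf_set e. \<sigma> x \<le> \<sigma> y"
proof -
  obtain x1 where x1: "x1 \<in> leaf_set d1" "mu \<sigma> d1 = \<sigma> x1" "\<forall>y\<in>leaf_set d1. \<sigma> x1 \<le> \<sigma> y"
    using mu_obtain .
  obtain x2 where x2: "x2 \<in> leaf_set d2" "mu \<sigma> d2 = \<sigma> x2" "\<forall>y\<in>leaf_set d2. \<sigma> x2 \<le> \<sigma> y"
    using mu_obtain .
  show thesis
  proof (cases "mu \<sigma> d2 \<le> mu \<sigma> d1")
    case True
    then have "vidx \<sigma> (Node d1 d2) = - int (\<sigma> x1)"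
      using x1(2) by (simp add: max_def)
    then show ?thesis using that x1(1,3) by blast
  next
    case False
    then have "vidx \<sigma> (Node d1 d2) = - int (\<sigma> x2)"
      using x2(2) by (simp add: max_def)
    then show ?thesis using that x2(1,3) by blast
  qed
qed

lemma vidx_value: "\<exists>y\<in>leaf_set t. vidx \<sigma> t = int (\<sigma> y) \<or> vidx \<sigma> t = - int (\<sigma> y)"
proof (cases t)
  case (Node d1 d2)
  obtain x e where "e = d1 \<or> e = d2" "vidx \<sigma> (Node d1 d2) = - int (\<sigma> x)"
    "x \<in> leaf_set e" "\<forall>y\<in>leaf_set e. \<sigma> x \<le> \<sigma> y"
    by (rule vidx_Node_obtain)
  then show ?thesis using Node by auto
qed simp

lemma Mset_subset: "Mset L \<rho> \<sigma> Ts i \<subseteq> {1..i}"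
  by (induction i) (auto simp: Let_def)

lemma Mset_prefix: "i \<le> i' \<Longrightarrow> Mset L \<rho> \<sigma> Ts i' \<inter> {..i} = Mset L \<rho> \<sigma> Ts i"
proof (induction i' rule: dec_induct)
  case base
  then show ?case using Mset_subset[of L \<rho> \<sigma> Ts i] by auto
qed (auto simp: Let_def)

lemma mem_Mset_iff:
  "j \<in> Mset L \<rho> \<sigma> Ts N \<longleftrightarrow>
     1 \<le> j \<and> j \<le> N \<and> mis_cond L \<rho> \<sigma> Ts (Mset L \<rho> \<sigma> Ts N \<inter> {..<j}) j"
proof (cases "1 \<le> j \<and> j \<le> N")
  case True
  then obtain p where p: "j = Suc p" "p < N"
    by (cases j) auto
  have "Mset L \<rho> \<sigma> Ts N \<inter> {..<j} = Mset L \<rho> \<sigma> Ts p"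
    using Mset_prefix[of p N L \<rho> \<sigma> Ts] p by (simp add: lessThan_Suc_atMost)
  moreover have "j \<in> Mset L \<rho> \<sigma> Ts N \<longleftrightarrow> j \<in> Mset L \<rho> \<sigma> Ts j"
    using Mset_prefix[of j N L \<rho> \<sigma> Ts] True by auto
  moreover have "j \<notin> Mset L \<rho> \<sigma> Ts p"
    using Mset_subset p(1) by fastforce
  ultimately show ?thesis
    using True p(1) by (auto simp: Let_def)
next
  case False
  then show ?thesis using Mset_subset[of L \<rho> \<sigma> Ts N] by auto
qed

lemma mem_mismatched_iff:
  "j \<in> mismatched L \<rho> \<sigma> Ts \<longleftrightarrow>
     1 \<le> j \<and> j < nleaves L \<rho> \<and> mis_cond L \<rho> \<sigma> Ts (mismatched L \<rho> \<sigma> Ts \<inter> {..<j}) j"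
  unfolding mismatched_def mem_Mset_iff by auto

lemma mismatched_subset: "mismatched L \<rho> \<sigma> Ts \<subseteq> {1..<nleaves L \<rho>}"
proof
  fix j
  assume "j \<in> mismatched L \<rho> \<sigma> Ts"
  then have "1 \<le> j \<and> j < nleaves L \<rho>"
    by (subst (asm) mem_mismatched_iff) blast
  then show "j \<in> {1..<nleaves L \<rho>}" by simp
qed

lemma mi_eq_nth: "mi L \<rho> \<sigma> Ts a = (0 # sorted_list_of_set (mismatched L \<rho> \<sigma> Ts)) ! a"
  by (cases a) (simp_all add: mi_def)

lemma bij_betw_mi:
  "bij_betw (mi L \<rho> \<sigma> Ts) {0..card (mismatched L \<rho> \<sigma> Ts)} (insert 0 (mismatched L \<rho> \<sigma> Ts))"
proof -
  let ?M = "mismatched L \<rho> \<sigma> Ts"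
  let ?xs = "0 # sorted_list_of_set ?M"
  have fin: "finite ?M"
    by (rule finite_subset[OF mismatched_subset]) simp
  have "0 \<notin> ?M"
    using mismatched_subset[of L \<rho> \<sigma> Ts] by auto
  then have "bij_betw ((!) ?xs) {..<length ?xs} (set ?xs)"
    using fin by (intro bij_betw_nth) simp_all
  moreover have "{..<length ?xs} = {0..card ?M}" "set ?xs = insert 0 ?M"
    using fin by auto
  moreover have "mi L \<rho> \<sigma> Ts = (!) ?xs"
    by (rule ext) (rule mi_eq_nth)
  ultimately show ?thesis by simp
qed

locale leafset_construction =
  fixes L :: "'a set" and \<rho> :: 'a and \<sigma> :: "'a \<Rightarrow> nat"
    and Ts :: "'a btree set" and T :: "'a btree"
  assumes rho_in_L: "\<rho> \<in> L"
    and trees_over: "\<forall>T'\<in>Ts. is_tree_over L \<rho> T'"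
    and bij_sigma: "bij_betw \<sigma> (L - {\<rho>}) {0..<nleaves L \<rho>}"
    and T_in_Ts: "T \<in> Ts"
begin

abbreviation "N \<equiv> nleaves L \<rho>"
abbreviation "M \<equiv> mismatched L \<rho> \<sigma> Ts"
abbreviation "K \<equiv> card M"
abbreviation "m \<equiv> mi L \<rho> \<sigma> Ts"
abbreviation "l \<equiv> lab L \<rho> \<sigma>"
abbreviation "A j \<equiv> l ` {0..j}"  (* the leaves of T^j *)

lemma distinct_leaves_T: "distinct (leaves T)" and leaf_set_T: "leaf_set T = L - {\<rho>}"
  using trees_over T_in_Ts unfolding is_tree_over_def by auto

lemma sigma_eq_iff: "x \<in> L - {\<rho>} \<Longrightarrow> y \<in> L - {\<rho>} \<Longrightarrow> \<sigma> x = \<sigma> y \<longleftrightarrow> x = y"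
  using bij_sigma by (auto simp: bij_betw_def inj_on_eq_iff)

lemma sigma_less: "y \<in> L - {\<rho>} \<Longrightarrow> \<sigma> y < N"
  using bij_betw_apply[OF bij_sigma] by fastforce

lemma lab_sigma: "y \<in> L - {\<rho>} \<Longrightarrow> l (\<sigma> y) = y"
  unfolding lab_def using bij_sigma by (simp add: bij_betw_def inv_into_f_f)

lemma sigma_less_Suc_cases: "y \<in> L - {\<rho>} \<Longrightarrow> \<sigma> y < Suc j \<Longrightarrow> \<sigma> y < j \<or> y = l j"
  using lab_sigma by (cases "\<sigma> y = j") auto

lemma lab_in: "k < N \<Longrightarrow> l k \<in> L - {\<rho>}"
  unfolding lab_def using bij_betw_apply[OF bij_betw_inv_into[OF bij_sigma]] by simp

lemma sigma_lab: "k < N \<Longrightarrow> \<sigma> (l k) = k"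
  unfolding lab_def using bij_sigma by (simp add: bij_betw_def f_inv_into_f)

lemma mem_A_iff: "j < N \<Longrightarrow> y \<in> A j \<longleftrightarrow> y \<in> L - {\<rho>} \<and> \<sigma> y \<le> j"
  using lab_in sigma_lab lab_sigma by (auto intro!: image_eqI)

lemma N_pos: "0 < N"
proof -
  obtain y where "y \<in> leaf_set T"
    using leaf_set_nonempty[of T] by (meson ex_in_conv)
  then show ?thesis
    using leaf_set_T sigma_less by fastforce
qed

lemma m_zero: "m 0 = 0"
  by (simp add: mi_def)

lemma m_in: "a \<le> K \<Longrightarrow> m a \<in> insert 0 M"
  using bij_betw_apply[OF bij_betw_mi[of L \<rho> \<sigma> Ts]] by simp

lemma m_less: "a \<le> K \<Longrightarrow> m a < N"
  using m_in N_pos mismatched_subset by fastforce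

lemma m_inj: "a \<le> K \<Longrightarrow> b \<le> K \<Longrightarrow> m a = m b \<longleftrightarrow> a = b"
  using bij_betw_imp_inj_on[OF bij_betw_mi[of L \<rho> \<sigma> Ts]] by (simp add: inj_on_eq_iff)

lemma m_in_M: "1 \<le> a \<Longrightarrow> a \<le> K \<Longrightarrow> m a \<in> M"
  using m_in[of a] m_inj[of a 0] m_zero by auto

lemma lab_m_inj: "a \<le> K \<Longrightarrow> b \<le> K \<Longrightarrow> l (m a) = l (m b) \<longleftrightarrow> a = b"
  using sigma_lab m_less m_inj by metis

lemma lab_m: "a \<le> K \<Longrightarrow> l (m a) \<in> L - {\<rho>} \<and> \<sigma> (l (m a)) = m a"
  using lab_in sigma_lab m_less by blast

lemma M_in_range: "k \<in> M \<Longrightarrow> \<exists>a\<le>K. m a = k"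
proof -
  assume "k \<in> M"
  then have "k \<in> m ` {0..K}"
    using bij_betw_mi[of L \<rho> \<sigma> Ts] unfolding bij_betw_def by simp
  then show ?thesis by auto
qed

lemma not_mismatched_cond:
  assumes "1 \<le> j" "j < N" "j \<notin> M"
  shows "\<forall>T'\<in>Ts. ola L \<rho> \<sigma> T' j = ola L \<rho> \<sigma> T j"
    and "\<forall>k\<in>M. k < j \<longrightarrow> ola L \<rho> \<sigma> T j \<noteq> - int k"
proof -
  have no: "\<not> mis_cond L \<rho> \<sigma> Ts (M \<inter> {..<j}) j"
    using assms mem_mismatched_iff[of j L \<rho> \<sigma> Ts] by simp
  then show all: "\<forall>T'\<in>Ts. ola L \<rho> \<sigma> T' j = ola L \<rho> \<sigma> T j"
    using T_in_Ts unfolding mis_cond_def by blast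
  show "\<forall>k\<in>M. k < j \<longrightarrow> ola L \<rho> \<sigma> T j \<noteq> - int k"
  proof (intro ballI impI notI)
    fix k
    assume "k \<in> M" "k < j" "ola L \<rho> \<sigma> T j = - int k"
    then have "\<exists>k\<in>M \<inter> {..<j}. \<forall>T'\<in>Ts. ola L \<rho> \<sigma> T' j = - int k"
      using all by auto
    then show False
      using no unfolding mis_cond_def by blast
  qed
qed

lemma cval_eq_ola: "1 \<le> j \<Longrightarrow> j < N \<Longrightarrow> j \<notin> M \<Longrightarrow> cval L \<rho> \<sigma> Ts j = ola L \<rho> \<sigma> T j"
  using not_mismatched_cond(1) someI[of "\<lambda>T. T \<in> Ts", OF T_in_Ts]
  unfolding cval_def by blast

lemma ola_eq_m_of_abs:
  assumes "1 \<le> j" "j < N" "j \<notin> M" "a \<le> K" "m a < j"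
    and "ola L \<rho> \<sigma> T j = int (m a) \<or> ola L \<rho> \<sigma> T j = - int (m a)"
  shows "ola L \<rho> \<sigma> T j = int (m a)"
proof (cases "m a = 0")
  case False
  then have "m a \<in> M"
    using m_in[OF assms(4)] by auto
  then show ?thesis
    using not_mismatched_cond(2)[OF assms(1-3)] assms(5,6) by auto
qed (use assms(6) in auto)

lemma span_iff:
  "c \<in> span L \<rho> \<sigma> Ts S a \<longleftrightarrow>
     c = int (m a) \<or> (\<exists>x\<in>S - {l (m a), \<rho>}. c = int (\<sigma> x) \<or> c = - int (\<sigma> x))"
  unfolding span_def by auto

lemma span_witness:
  assumes "a \<le> K" "l (m a) \<in> S" "c \<in> span L \<rho> \<sigma> Ts S a"
  shows "\<exists>y\<in>S - {\<rho>}. c = int (\<sigma> y) \<or> c = - int (\<sigma> y)"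
  using assms(3) unfolding span_iff
proof
  assume "c = int (m a)"
  moreover have "l (m a) \<in> S - {\<rho>}" "\<sigma> (l (m a)) = m a"
    using assms(2) lab_m[OF assms(1)] by auto
  ultimately show ?thesis by (metis of_nat_eq_iff)
qed blast

lemma nonneg_in_span:
  assumes "a \<le> K" "S \<subseteq> L" "l (m a) \<in> S" "y \<in> L - {\<rho>}" "int (\<sigma> y) \<in> span L \<rho> \<sigma> Ts S a"
  shows "y \<in> S"
proof -
  obtain x where "x \<in> S - {\<rho>}" "int (\<sigma> y) = int (\<sigma> x) \<or> int (\<sigma> y) = - int (\<sigma> x)"
    using span_witness assms(1,3,5) by blast
  then have "x \<in> L - {\<rho>}" "\<sigma> y = \<sigma> x"
    using assms(2) by auto
  then show ?thesis
    using sigma_eq_iff assms(4) \<open>x \<in> S - {\<rho>}\<close> by blast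
qed

lemma neg_in_span:
  assumes "1 \<le> a" "a \<le> K" "S \<subseteq> L" "x \<in> L - {\<rho>}" "- int (\<sigma> x) \<in> span L \<rho> \<sigma> Ts S a"
  shows "x \<in> S - {l (m a)}"
proof -
  have "0 < m a"
    using m_in_M assms(1,2) mismatched_subset by fastforce
  then have "- int (\<sigma> x) \<noteq> int (m a)"
    by simp
  then obtain y where y: "y \<in> S - {l (m a), \<rho>}"
    "- int (\<sigma> x) = int (\<sigma> y) \<or> - int (\<sigma> x) = - int (\<sigma> y)"
    using assms(5) unfolding span_iff by blast
  then have "\<sigma> x = \<sigma> y"
    by auto
  moreover have "y \<in> L - {\<rho>}"
    using y(1) assms(3) by blast
  ultimately have "x = y"
    using sigma_eq_iff assms(4) by blast
  then show ?thesis using y by blast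
qed

lemma restrict_A_obtain:
  assumes "j < N"
  obtains Tj where "restrict (A j) T = Some Tj" "leaf_set Tj = A j"
proof -
  have A_sub: "A j \<subseteq> leaf_set T"
    using lab_in assms leaf_set_T by auto
  have "l j \<in> A j"
    by auto
  then have "leaf_set T \<inter> A j \<noteq> {}"
    using A_sub by blast
  then have "restrict (A j) T \<noteq> None"
    by (simp add: restrict_eq_None_iff)
  then obtain Tj where Tj: "restrict (A j) T = Some Tj"
    by blast
  moreover have "leaf_set Tj = A j"
    using leaf_set_restrict[OF Tj] A_sub by auto
  ultimately show thesis
    using that by blast
qed

lemma ola_sibling_obtain:
  assumes "1 \<le> j" "j < N"
  obtains s t1 t2 where "ola L \<rho> \<sigma> T j = vidx \<sigma> s" "siblings T t1 t2"
    "leaf_set t1 \<inter> A j = {l j}" "restrict (A j) t2 = Some s"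
    "leaf_set s \<subseteq> {y \<in> L - {\<rho>}. \<sigma> y < j}"
proof -
  obtain Tj where Tj: "restrict (A j) T = Some Tj" "leaf_set Tj = A j"
    by (rule restrict_A_obtain[OF assms(2)])
  have "\<sigma> (l 0) = 0" "\<sigma> (l j) = j"
    using sigma_lab N_pos assms(2) by auto
  then have "l 0 \<noteq> l j"
    using assms(1) by auto
  then have "Tj \<noteq> Leaf (l j)"
    using Tj(2) by auto
  then obtain s where s: "sibling (l j) Tj = Some s" "siblings Tj (Leaf (l j)) s"
    using sibling_exists[of "l j" Tj] Tj(2) by auto
  obtain t1 t2 where t: "siblings T t1 t2" "restrict (A j) t1 = Some (Leaf (l j))"
    "restrict (A j) t2 = Some s"
    using restrict_siblings[OF Tj(1) s(2)] by blast
  have t1: "leaf_set t1 \<inter> A j = {l j}"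
    using leaf_set_restrict[OF t(2)] by simp
  have "leaf_set s \<subseteq> {y \<in> L - {\<rho>}. \<sigma> y < j}"
  proof
    fix y
    assume "y \<in> leaf_set s"
    then have "y \<in> leaf_set t2 \<inter> A j"
      using leaf_set_restrict[OF t(3)] by simp
    moreover have "leaf_set t1 \<inter> leaf_set t2 = {}"
      using siblings_disjoint[OF t(1) distinct_leaves_T] .
    ultimately have "y \<noteq> l j" "y \<in> L - {\<rho>}" "\<sigma> y < Suc j"
      using t1 mem_A_iff[OF assms(2), of y] by auto
    then show "y \<in> {y \<in> L - {\<rho>}. \<sigma> y < j}"
      using sigma_less_Suc_cases by blast
  qed
  moreover have "ola L \<rho> \<sigma> T j = vidx \<sigma> s"
    unfolding ola_def using Tj(1) s(1) by simp
  ultimately show thesis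
    using that t(1,3) t1 by blast
qed

definition lca_above :: "nat \<Rightarrow> 'a set \<Rightarrow> bool" where
  "lca_above b S \<longleftrightarrow> (\<forall>y\<in>leaf_set (lca S T). b \<le> \<sigma> y)"

lemma lca_above_insert_sibling:
  assumes "j < N" "S \<subseteq> L - {\<rho>}" "lca_above b S" "siblings T t1 t2"
    and "leaf_set t1 \<inter> A j = {l j}" "z \<in> S" "z \<in> leaf_set t2 \<inter> A j"
    and "leaf_set t2 \<inter> A j \<subseteq> leaf_set (lca S T)"
  shows "lca_above b (insert (l j) S)"
  unfolding lca_above_def
proof
  fix y
  assume y: "y \<in> leaf_set (lca (insert (l j) S) T)"
  have S_T: "S \<subseteq> leaf_set T"
    using assms(2) leaf_set_T by simp
  have "b \<le> \<sigma> z"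
    using assms(3,6) subset_leaf_set_lca[OF S_T] unfolding lca_above_def by blast
  moreover have "\<sigma> z \<le> j"
    using assms(7) mem_A_iff[OF assms(1), of z] by auto
  ultimately have b_le: "b \<le> j"
    by simp
  have "l j \<in> leaf_set t1" "z \<in> leaf_set t2"
    using assms(5,7) by auto
  then have y_in: "y \<in> leaf_set (lca S T) \<union> leaf_set t1 \<union> leaf_set t2"
    using leaf_set_lca_insert_sibling[OF distinct_leaves_T S_T assms(4) _ assms(6)] y by blast
  have y_L: "y \<in> L - {\<rho>}"
    using y leaf_set_subtree[OF lca_in_subtrees, of "insert (l j) S" T] leaf_set_T by blast
  show "b \<le> \<sigma> y"
  proof (cases "\<sigma> y \<le> j")
    case True
    then have "y \<in> A j"
      using mem_A_iff[OF assms(1), of y] y_L by blast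
    then have "y = l j \<or> y \<in> leaf_set (lca S T)"
      using y_in assms(5,8) by blast
    then show ?thesis
      using sigma_lab[OF assms(1)] b_le assms(3) unfolding lca_above_def by auto
  qed (use b_le in simp)
qed

lemma lca_not_inside_min_child:
  assumes "j < N" "a \<le> K" "S \<subseteq> L - {\<rho>}" "l (m a) \<in> S" "lca_above (m a) S"
    and "x \<in> S - {l (m a)}" "\<sigma> x \<le> j"
    and "restrict (A j) E = Some e" "\<forall>y\<in>leaf_set e. \<sigma> x \<le> \<sigma> y"
  shows "\<not> leaf_set (lca S T) \<subseteq> leaf_set E"
proof
  assume inside: "leaf_set (lca S T) \<subseteq> leaf_set E"
  have S_R: "S \<subseteq> leaf_set (lca S T)"
    using subset_leaf_set_lca[of S T] assms(3) leaf_set_T by auto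
  have lm: "l (m a) \<in> L - {\<rho>}" "\<sigma> (l (m a)) = m a"
    using lab_m[OF assms(2)] by auto
  have "m a \<le> \<sigma> x"
    using assms(5,6) S_R unfolding lca_above_def by blast
  then have "l (m a) \<in> A j"
    using assms(7) by auto
  moreover have "l (m a) \<in> leaf_set E"
    using inside S_R assms(4) by blast
  ultimately have "l (m a) \<in> leaf_set e"
    using leaf_set_restrict[OF assms(8)] by blast
  then have "\<sigma> x \<le> m a"
    using assms(9) lm(2) by fastforce
  then have "\<sigma> x = \<sigma> (l (m a))"
    using \<open>m a \<le> \<sigma> x\<close> lm(2) by simp
  moreover have "x \<in> L - {\<rho>}"
    using assms(3,6) by blast
  ultimately have "x = l (m a)"
    using sigma_eq_iff lm(1) by blast
  then show False
    using assms(6) by blast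
qed

lemma Node_sibling_inside_lca:
  assumes "j < N" "1 \<le> a" "a \<le> K" "S \<subseteq> L - {\<rho>}" "l (m a) \<in> S" "lca_above (m a) S"
    and "restrict (A j) t2 = Some (Node d1 d2)" "t2 \<in> subtrees T"
    and "vidx \<sigma> (Node d1 d2) \<in> span L \<rho> \<sigma> Ts S a"
  shows "\<exists>z\<in>S. z \<in> leaf_set (Node d1 d2) \<and> leaf_set (Node d1 d2) \<subseteq> leaf_set (lca S T)"
proof -
  obtain x e where e: "e = d1 \<or> e = d2" "vidx \<sigma> (Node d1 d2) = - int (\<sigma> x)"
    "x \<in> leaf_set e" "\<forall>y\<in>leaf_set e. \<sigma> x \<le> \<sigma> y"
    by (rule vidx_Node_obtain)
  obtain E E' where E: "siblings t2 E E'" "restrict (A j) E = Some e"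
    "leaf_set (Node d1 d2) = (leaf_set E \<union> leaf_set E') \<inter> A j"
    by (rule restrict_Node_child[OF assms(7) e(1)])
  have x_s: "x \<in> leaf_set (Node d1 d2)"
    using e(1,3) by auto
  then have x: "x \<in> L - {\<rho>}" "\<sigma> x \<le> j"
    using leaf_set_restrict[OF assms(7)] mem_A_iff[OF assms(1), of x] by auto
  have "S \<subseteq> L"
    using assms(4) by blast
  then have x_S: "x \<in> S - {l (m a)}"
    using neg_in_span[OF assms(2,3) _ x(1)] assms(9) e(2) by simp
  have x_R: "x \<in> leaf_set (lca S T)"
    using x_S subset_leaf_set_lca[of S T] assms(4) leaf_set_T by auto
  have x_E: "x \<in> leaf_set E"
    using leaf_set_restrict[OF E(2)] e(3) by blast
  have "leaf_set E \<union> leaf_set E' \<subseteq> leaf_set (lca S T)"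
    using siblings_nested[OF distinct_leaves_T siblings_subtree_trans[OF E(1) assms(8)]
        lca_in_subtrees x_R x_E]
      lca_not_inside_min_child[OF assms(1,3,4,5,6) x_S x(2) E(2) e(4)] by blast
  then show ?thesis
    using E(3) x_s x_S by blast
qed

lemma sibling_inside_lca:
  assumes "j < N" "1 \<le> a" "a \<le> K" "S \<subseteq> L - {\<rho>}" "l (m a) \<in> S" "lca_above (m a) S"
    and "restrict (A j) t2 = Some s" "t2 \<in> subtrees T"
    and "vidx \<sigma> s \<in> span L \<rho> \<sigma> Ts S a"
  shows "\<exists>z\<in>S. z \<in> leaf_set s \<and> leaf_set s \<subseteq> leaf_set (lca S T)"
proof (cases s)
  case (Leaf y)
  have "y \<in> L - {\<rho>}"
    using leaf_set_restrict[OF assms(7)] Leaf mem_A_iff[OF assms(1), of y] by auto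
  moreover have "S \<subseteq> L"
    using assms(4) by blast
  ultimately have "y \<in> S"
    using nonneg_in_span[OF assms(3) _ assms(5)] assms(9) Leaf by simp
  then show ?thesis
    using Leaf subset_leaf_set_lca[of S T] assms(4) leaf_set_T by auto
next
  case (Node d1 d2)
  then show ?thesis
    using Node_sibling_inside_lca[OF assms(1-6) _ assms(8)] assms(7,9) by simp
qed

lemma lca_above_insert:
  assumes "1 \<le> j" "j < N" "1 \<le> a" "a \<le> K" "S \<subseteq> L - {\<rho>}" "l (m a) \<in> S" "lca_above (m a) S"
    and "ola L \<rho> \<sigma> T j \<in> span L \<rho> \<sigma> Ts S a"
  shows "lca_above (m a) (insert (l j) S)"
proof -
  obtain s t1 t2 where st: "ola L \<rho> \<sigma> T j = vidx \<sigma> s" "siblings T t1 t2"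
    "leaf_set t1 \<inter> A j = {l j}" "restrict (A j) t2 = Some s"
    "leaf_set s \<subseteq> {y \<in> L - {\<rho>}. \<sigma> y < j}"
    by (rule ola_sibling_obtain[OF assms(1,2)])
  have "t2 \<in> subtrees T"
    using siblings_subtrees[OF st(2)] by blast
  then obtain z where z: "z \<in> S" "z \<in> leaf_set s" and s_R: "leaf_set s \<subseteq> leaf_set (lca S T)"
    using sibling_inside_lca[OF assms(2-7) st(4)] st(1) assms(8) by auto
  have "leaf_set s = leaf_set t2 \<inter> A j"
    using leaf_set_restrict[OF st(4)] .
  then have "z \<in> leaf_set t2 \<inter> A j" "leaf_set t2 \<inter> A j \<subseteq> leaf_set (lca S T)"
    using z(2) s_R by auto
  then show ?thesis
    by (rule lca_above_insert_sibling[OF assms(2,5,7) st(2,3) z(1)])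
qed

definition partial_partition :: "nat \<Rightarrow> (nat \<Rightarrow> 'a set) \<Rightarrow> bool" where
  "partial_partition j Ls \<longleftrightarrow>
     (\<forall>a\<le>K. Ls a \<subseteq> L) \<and> (\<forall>a\<le>K. \<rho> \<in> Ls a \<longrightarrow> a = 0) \<and> (\<forall>a\<le>K. l (m a) \<in> Ls a)
   \<and> (\<forall>a\<le>K. \<forall>y\<in>Ls a - {\<rho>}. \<sigma> y < j \<or> y = l (m a))
   \<and> (\<forall>a\<le>K. \<forall>b\<le>K. a \<noteq> b \<longrightarrow> Ls a \<inter> Ls b \<subseteq> {\<rho>})
   \<and> (\<forall>y\<in>L - {\<rho>}. \<sigma> y < j \<longrightarrow> (\<exists>a\<le>K. y \<in> Ls a))"

definition roots_above :: "(nat \<Rightarrow> 'a set) \<Rightarrow> bool" where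
  "roots_above Ls \<longleftrightarrow> (\<forall>a\<in>{1..K}. lca_above (m a) (Ls a))"

lemma partial_partitionI:
  assumes "\<And>a. a \<le> K \<Longrightarrow> Ls a \<subseteq> L" "\<And>a. a \<le> K \<Longrightarrow> \<rho> \<in> Ls a \<Longrightarrow> a = 0"
    and "\<And>a. a \<le> K \<Longrightarrow> l (m a) \<in> Ls a"
    and "\<And>a y. a \<le> K \<Longrightarrow> y \<in> Ls a - {\<rho>} \<Longrightarrow> \<sigma> y < j \<or> y = l (m a)"
    and "\<And>a b. a \<le> K \<Longrightarrow> b \<le> K \<Longrightarrow> a \<noteq> b \<Longrightarrow> Ls a \<inter> Ls b \<subseteq> {\<rho>}"
    and "\<And>y. y \<in> L - {\<rho>} \<Longrightarrow> \<sigma> y < j \<Longrightarrow> \<exists>a\<le>K. y \<in> Ls a"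
  shows "partial_partition j Ls"
  unfolding partial_partition_def using assms by simp

lemma partial_partitionD:
  assumes "partial_partition j Ls" "a \<le> K"
  shows "Ls a \<subseteq> L" "\<rho> \<in> Ls a \<Longrightarrow> a = 0" "l (m a) \<in> Ls a"
    and "y \<in> Ls a - {\<rho>} \<Longrightarrow> \<sigma> y < j \<or> y = l (m a)"
    and "b \<le> K \<Longrightarrow> a \<noteq> b \<Longrightarrow> Ls a \<inter> Ls b \<subseteq> {\<rho>}"
  using assms unfolding partial_partition_def by simp_all

lemma partial_partition_covers:
  "partial_partition j Ls \<Longrightarrow> y \<in> L - {\<rho>} \<Longrightarrow> \<sigma> y < j \<Longrightarrow> \<exists>a\<le>K. y \<in> Ls a"
  unfolding partial_partition_def by simp

lemma partial_partition_init: "partial_partition 1 (init_sets L \<rho> \<sigma> Ts)"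
proof -
  let ?I = "init_sets L \<rho> \<sigma> Ts"
  have I: "?I a = (if a = 0 then {\<rho>, l (m a)} else {l (m a)})" for a
    by (simp add: init_sets_def m_zero)
  show ?thesis
  proof (rule partial_partitionI)
    fix a
    assume "a \<le> K"
    then show "?I a \<subseteq> L" "\<rho> \<in> ?I a \<Longrightarrow> a = 0" "l (m a) \<in> ?I a"
      and "\<And>y. y \<in> ?I a - {\<rho>} \<Longrightarrow> \<sigma> y < 1 \<or> y = l (m a)"
      using lab_m[of a] rho_in_L unfolding I by (auto split: if_splits)
  next
    fix a b
    assume "a \<le> K" "b \<le> K" "a \<noteq> b"
    then have "l (m a) \<noteq> l (m b)"
      using lab_m_inj by blast
    then show "?I a \<inter> ?I b \<subseteq> {\<rho>}"
      unfolding I by auto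
  next
    fix y
    assume "y \<in> L - {\<rho>}" "\<sigma> y < 1"
    then have "y = l (m 0)"
      using lab_sigma m_zero by fastforce
    then show "\<exists>a\<le>K. y \<in> ?I a"
      unfolding I by auto
  qed
qed

lemma roots_above_init: "roots_above (init_sets L \<rho> \<sigma> Ts)"
  unfolding roots_above_def lca_above_def
proof (intro ballI)
  fix a y
  assume a: "a \<in> {1..K}" and y: "y \<in> leaf_set (lca (init_sets L \<rho> \<sigma> Ts a) T)"
  have "init_sets L \<rho> \<sigma> Ts a = {l (m a)}"
    using a by (simp add: init_sets_def)
  moreover have "l (m a) \<in> leaf_set T"
    using lab_m a leaf_set_T by auto
  ultimately have "y = l (m a)"
    using y leaf_set_lca_minimal[OF distinct_leaves_T, of "{l (m a)}" "Leaf (l (m a))"]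
      Leaf_in_subtrees[of "l (m a)" T]
    by auto
  then show "m a \<le> \<sigma> y"
    using lab_m a by simp
qed

lemma span_exists:
  assumes "1 \<le> j" "j < N" "j \<notin> M" "partial_partition j Ls"
  shows "\<exists>a\<le>K. ola L \<rho> \<sigma> T j \<in> span L \<rho> \<sigma> Ts (Ls a) a"
proof -
  obtain s t1 t2 where s: "ola L \<rho> \<sigma> T j = vidx \<sigma> s" "siblings T t1 t2"
    "leaf_set t1 \<inter> A j = {l j}" "restrict (A j) t2 = Some s"
    "leaf_set s \<subseteq> {y \<in> L - {\<rho>}. \<sigma> y < j}"
    by (rule ola_sibling_obtain[OF assms(1,2)])
  obtain y where y: "y \<in> leaf_set s" "vidx \<sigma> s = int (\<sigma> y) \<or> vidx \<sigma> s = - int (\<sigma> y)"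
    using vidx_value[of s \<sigma>] by blast
  let ?c = "ola L \<rho> \<sigma> T j"
  have c: "?c = int (\<sigma> y) \<or> ?c = - int (\<sigma> y)"
    using y(2) s(1) by simp
  have yL: "y \<in> L - {\<rho>}" "\<sigma> y < j"
    using y(1) s(5) by auto
  then obtain a where a: "a \<le> K" "y \<in> Ls a"
    using partial_partition_covers[OF assms(4) yL] by blast
  have "?c \<in> span L \<rho> \<sigma> Ts (Ls a) a"
  proof (cases "y = l (m a)")
    case False
    then have "y \<in> Ls a - {l (m a), \<rho>}"
      using a(2) yL(1) by blast
    then show ?thesis
      using c unfolding span_iff by blast
  next
    case True
    then have "\<sigma> y = m a"
      using lab_m a(1) by simp
    then have "?c = int (m a)"
      using ola_eq_m_of_abs[OF assms(1-3) a(1)] yL(2) c by simp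
    then show ?thesis
      unfolding span_iff by blast
  qed
  then show ?thesis
    using a(1) by blast
qed

lemma span_unique:
  assumes "partial_partition j Ls" "a \<le> K" "b \<le> K"
    and "c \<in> span L \<rho> \<sigma> Ts (Ls a) a" "c \<in> span L \<rho> \<sigma> Ts (Ls b) b"
  shows "a = b"
proof -
  note Ls = partial_partitionD(1,3)[OF assms(1,2)] partial_partitionD(1,3)[OF assms(1,3)]
  have disj: "a \<noteq> b \<Longrightarrow> Ls a \<inter> Ls b \<subseteq> {\<rho>}"
    using partial_partitionD(5)[OF assms(1,2,3)] .
  obtain ya where ya: "ya \<in> Ls a - {\<rho>}" "c = int (\<sigma> ya) \<or> c = - int (\<sigma> ya)"
    using span_witness[OF assms(2) Ls(2) assms(4)] by blast
  obtain yb where yb: "yb \<in> Ls b - {\<rho>}" "c = int (\<sigma> yb) \<or> c = - int (\<sigma> yb)"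
    using span_witness[OF assms(3) Ls(4) assms(5)] by blast
  have "\<sigma> ya = \<sigma> yb"
    using ya(2) yb(2) by auto
  moreover have "ya \<in> L - {\<rho>}" "yb \<in> L - {\<rho>}"
    using ya(1) yb(1) Ls(1,3) by auto
  ultimately have "ya = yb"
    using sigma_eq_iff by blast
  then show "a = b"
    using disj ya(1) yb(1) by blast
qed

(* Uniqueness holds because witnesses of the span lie in sets that are disjoint apart from rho;
   existence because the leaves of the sibling of l_j were placed before step j, and a value
   -m_a would have made j mismatched. *)
lemma cstep_target:
  assumes "1 \<le> j" "j < N" "j \<notin> M" "partial_partition j Ls"
  obtains a where "a \<le> K" "ola L \<rho> \<sigma> T j \<in> span L \<rho> \<sigma> Ts (Ls a) a"
    "cstep L \<rho> \<sigma> Ts Ls j = Ls(a := insert (l j) (Ls a))"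
proof -
  let ?P = "\<lambda>a. a \<le> K \<and> ola L \<rho> \<sigma> T j \<in> span L \<rho> \<sigma> Ts (Ls a) a"
  have "\<exists>!a. ?P a"
  proof (rule ex_ex1I)
    show "\<exists>a. ?P a"
      using span_exists[OF assms] by blast
  next
    fix a b
    assume "?P a" "?P b"
    then show "a = b"
      using span_unique[OF assms(4)] by blast
  qed
  then have "?P (THE a. ?P a)"
    by (rule theI')
  moreover have "cstep L \<rho> \<sigma> Ts Ls j = Ls((THE a. ?P a) := insert (l j) (Ls (THE a. ?P a)))"
    using assms(3) cval_eq_ola[OF assms(1-3)] by (simp add: cstep_def Let_def)
  ultimately show thesis
    using that[of "THE a. ?P a"] by simp
qed

lemma partial_partition_mismatched:
  assumes "j \<in> M" "partial_partition j Ls"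
  shows "partial_partition (Suc j) Ls"
proof (rule partial_partitionI)
  fix y
  assume y: "y \<in> L - {\<rho>}" "\<sigma> y < Suc j"
  from sigma_less_Suc_cases[OF y] show "\<exists>a\<le>K. y \<in> Ls a"
  proof
    assume "\<sigma> y < j"
    then show ?thesis
      using partial_partition_covers[OF assms(2) y(1)] by blast
  next
    assume "y = l j"
    moreover obtain a where "a \<le> K" "m a = j"
      using M_in_range assms(1) by blast
    ultimately show ?thesis
      using partial_partitionD(3)[OF assms(2)] by blast
  qed
qed (use partial_partitionD[OF assms(2)] in fastforce)+

lemma lab_notin_partial_partition:
  assumes "1 \<le> j" "j < N" "j \<notin> M" "partial_partition j Ls" "b \<le> K"
  shows "l j \<notin> Ls b"
proof
  assume "l j \<in> Ls b"
  moreover have lj: "l j \<in> L - {\<rho>}" "\<sigma> (l j) = j"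
    using lab_in sigma_lab assms(2) by auto
  ultimately have "l j = l (m b)"
    using partial_partitionD(4)[OF assms(4,5), of "l j"] by auto
  then have "j = m b"
    using lab_m[OF assms(5)] lj(2) by simp
  then show False
    using m_in[OF assms(5)] assms(1,3) by auto
qed

lemma partial_partition_insert:
  assumes "1 \<le> j" "j < N" "j \<notin> M" "a0 \<le> K" "partial_partition j Ls"
  shows "partial_partition (Suc j) (Ls(a0 := insert (l j) (Ls a0)))"
proof -
  let ?Ls = "Ls(a0 := insert (l j) (Ls a0))"
  have lj: "l j \<in> L - {\<rho>}" "\<sigma> (l j) = j"
    using lab_in sigma_lab assms(2) by auto
  show ?thesis
  proof (rule partial_partitionI)
    fix a
    assume a: "a \<le> K"
    then show "?Ls a \<subseteq> L" "\<rho> \<in> ?Ls a \<Longrightarrow> a = 0" "l (m a) \<in> ?Ls a"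
      using partial_partitionD(1-3)[OF assms(5) a] lj by (auto split: if_splits)
    fix y
    assume "y \<in> ?Ls a - {\<rho>}"
    then have "y = l j \<or> y \<in> Ls a - {\<rho>}"
      by (auto split: if_splits)
    then show "\<sigma> y < Suc j \<or> y = l (m a)"
      using partial_partitionD(4)[OF assms(5) a] lj by fastforce
  next
    fix a b
    assume "a \<le> K" "b \<le> K" "a \<noteq> b"
    then show "?Ls a \<inter> ?Ls b \<subseteq> {\<rho>}"
      using partial_partitionD(5)[OF assms(5)] lab_notin_partial_partition[OF assms(1,2,3,5)] by auto
  next
    fix y
    assume y: "y \<in> L - {\<rho>}" "\<sigma> y < Suc j"
    from sigma_less_Suc_cases[OF y] show "\<exists>a\<le>K. y \<in> ?Ls a"
    proof
      assume "\<sigma> y < j"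
      then obtain a where "a \<le> K" "y \<in> Ls a"
        using partial_partition_covers[OF assms(5) y(1)] by blast
      then show ?thesis
        by (intro exI[of _ a]) auto
    next
      assume "y = l j"
      then show ?thesis
        using assms(4) by (intro exI[of _ a0]) auto
    qed
  qed
qed

lemma partial_partition_cstep:
  assumes "1 \<le> j" "j < N" "partial_partition j Ls"
  shows "partial_partition (Suc j) (cstep L \<rho> \<sigma> Ts Ls j)"
proof (cases "j \<in> M")
  case True
  then show ?thesis
    using partial_partition_mismatched assms(3) by (simp add: cstep_def)
next
  case False
  obtain a where "a \<le> K" "ola L \<rho> \<sigma> T j \<in> span L \<rho> \<sigma> Ts (Ls a) a"
    "cstep L \<rho> \<sigma> Ts Ls j = Ls(a := insert (l j) (Ls a))"
    by (rule cstep_target[OF assms(1,2) False assms(3)])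
  then show ?thesis
    using partial_partition_insert[OF assms(1,2) False _ assms(3)] by simp
qed

lemma roots_above_cstep:
  assumes "1 \<le> j" "j < N" "partial_partition j Ls" "roots_above Ls"
  shows "roots_above (cstep L \<rho> \<sigma> Ts Ls j)"
proof (cases "j \<in> M")
  case True
  then show ?thesis
    using assms(4) by (simp add: cstep_def)
next
  case False
  obtain a where a: "a \<le> K" "ola L \<rho> \<sigma> T j \<in> span L \<rho> \<sigma> Ts (Ls a) a"
    "cstep L \<rho> \<sigma> Ts Ls j = Ls(a := insert (l j) (Ls a))"
    by (rule cstep_target[OF assms(1,2) False assms(3)])
  have "lca_above (m a) (insert (l j) (Ls a))" if "1 \<le> a"
  proof -
    have "Ls a \<subseteq> L - {\<rho>}"
      using partial_partitionD(1,2)[OF assms(3) a(1)] that by auto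
    moreover have "lca_above (m a) (Ls a)"
      using assms(4) that a(1) unfolding roots_above_def by auto
    ultimately show ?thesis
      using lca_above_insert[OF assms(1,2) that a(1) _ partial_partitionD(3)[OF assms(3) a(1)] _ a(2)]
      by blast
  qed
  then show ?thesis
    using assms(4) a(3) unfolding roots_above_def by auto
qed

lemma invariants_foldl:
  assumes "1 \<le> j" "j \<le> N"
  shows "partial_partition j (foldl (cstep L \<rho> \<sigma> Ts) (init_sets L \<rho> \<sigma> Ts) [1..<j])
    \<and> roots_above (foldl (cstep L \<rho> \<sigma> Ts) (init_sets L \<rho> \<sigma> Ts) [1..<j])"
  using assms
proof (induction j rule: nat_induct_at_least)
  case base
  then show ?case
    using partial_partition_init roots_above_init by simp
next
  case (Suc j)
  then show ?case
    using partial_partition_cstep roots_above_cstep by simp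
qed

lemma lab_notin_top_subtree_leaves:
  assumes "i \<le> K" "j < m i"
  shows "l j \<notin> top_subtree_leaves \<rho> (leafsets L \<rho> \<sigma> Ts i) T"
proof -
  let ?Ls = "leafsets L \<rho> \<sigma> Ts"
  have inv: "partial_partition N ?Ls" "roots_above ?Ls"
    using invariants_foldl[of N] N_pos unfolding leafsets_def by auto
  have "i \<noteq> 0"
  proof
    assume "i = 0"
    then show False
      using assms(2) m_zero by simp
  qed
  then have "\<rho> \<notin> ?Ls i" "lca_above (m i) (?Ls i)"
    using partial_partitionD(2)[OF inv(1) assms(1)] inv(2) assms(1) unfolding roots_above_def by auto
  moreover have "\<sigma> (l j) = j"
    using sigma_lab assms m_less by fastforce
  ultimately show ?thesis
    using assms(2) unfolding top_subtree_leaves_def lca_above_def by auto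
qed

end

theorem lemma4:
  fixes L :: "'a set" and \<rho> :: 'a and \<sigma> :: "'a \<Rightarrow> nat"
    and Ts :: "'a btree set" and T :: "'a btree" and i :: nat
  assumes "finite L" and "\<rho> \<in> L"
    and "finite Ts" and "card Ts \<ge> 2"
    and "\<forall>T'\<in>Ts. is_tree_over L \<rho> T'"
    and "bij_betw \<sigma> (L - {\<rho>}) {0..<nleaves L \<rho>}"
    and "T \<in> Ts"
    and "i \<le> card (mismatched L \<rho> \<sigma> Ts)"
  shows "\<forall>j < mi L \<rho> \<sigma> Ts i.
           lab L \<rho> \<sigma> j \<notin> top_subtree_leaves \<rho> (leafsets L \<rho> \<sigma> Ts i) T"
proof -
  interpret leafset_construction L \<rho> \<sigma> Ts T
    using assms by unfold_locales auto
  show ?thesis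
    using lab_notin_top_subtree_leaves assms(8) by blast
qed

end
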